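(* Let $q$ be odd, $\alpha,\beta\in\mathbb{F}_{q^2}$ with $\alpha\ne0$ and $(\beta^q-\beta)^2+4\alpha^{q+1}$ a nonsquare in $\mathbb{F}_q$, let $w=\epsilon^2$ and $R_2=(0,w\epsilon,1)$. Then (1) $\mathrm{pedal}(R_2)$ consists exactly of the points $Q'_x=(x,\,2\alpha x^2+(\beta-\beta^q)x^{q+1}+w\epsilon,\,1)$ with $x\in\mathbb{F}_{q^2}$ satisfying $\alpha x^2-\alpha^q x^{2q}+(\beta-\beta^q)x^{q+1}+2w\epsilon=0$; (2) the points of $\mathrm{pedal}(R_2)$ lie on the lines of the Baer pencil joining the vertex $U_\infty=(1,0,0)$ to the Baer subline $\{E_{s-w\epsilon}=(0,s-w\epsilon,1): s\in\mathbb{F}_q\}\cup\{(0,1,0)\}$.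
   Context: Points of $\mathrm{PG}(2,q^2)$ have homogeneous coordinates $(x,y,z)$. $\zeta$ is a primitive element of $\mathbb{F}_{q^2}$ and $\epsilon=\zeta^{(q+1)/2}$ (so $\epsilon^q=-\epsilon$ and $w=\epsilon^2$ is a primitive element of $\mathbb{F}_q$). $\mathcal U_{\alpha\beta}=\{(x,\alpha x^2+\beta x^{q+1}+r,1): x\in\mathbb{F}_{q^2}, r\in\mathbb{F}_q\}\cup\{(0,1,0)\}$, which under the hypotheses is a unital (a set of $q^3+1$ points meeting every line in $1$ or $q+1$ points). For a point $P$ not on the unital, $\mathrm{pedal}(P)$ is the set of points of contact of the $q+1$ tangent lines (lines meeting the unital in exactly one point) through $P$. A Baer pencil is the set of $q+1$ lines joining a vertex point to the $q+1$ points of a Baer subline (a set of points of a line projectively equivalent to $\mathrm{PG}(1,q)$). *)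

theory Defs
  imports Main
begin

type_synonym 'a vec3 = "'a \<times> 'a \<times> 'a"

definition scal3 :: "'a::field \<Rightarrow> 'a vec3 \<Rightarrow> 'a vec3" where
  "scal3 c v = (case v of (x, y, z) \<Rightarrow> (c * x, c * y, c * z))"

definition dot3 :: "'a::field vec3 \<Rightarrow> 'a vec3 \<Rightarrow> 'a" where
  "dot3 a v = (case a of (a1, a2, a3) \<Rightarrow> case v of (x, y, z) \<Rightarrow> a1 * x + a2 * y + a3 * z)"

definition pt :: "'a::field vec3 \<Rightarrow> 'a vec3 set" where
  "pt v = {scal3 c v | c. c \<noteq> 0}"

definition pg_points :: "'a::field vec3 set set" where
  "pg_points = {pt v | v. v \<noteq> (0, 0, 0)}"

definition pg_line :: "'a::field vec3 \<Rightarrow> 'a vec3 set set" where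
  "pg_line a = {pt v | v. v \<noteq> (0, 0, 0) \<and> dot3 a v = 0}"

definition pg_lines :: "'a::field vec3 set set set" where
  "pg_lines = {pg_line a | a. a \<noteq> (0, 0, 0)}"

definition subfield_q :: "nat \<Rightarrow> 'a::field set" where
  "subfield_q q = {x. x ^ q = x}"

definition unital_ab :: "nat \<Rightarrow> 'a::field \<Rightarrow> 'a \<Rightarrow> 'a vec3 set set" where
  "unital_ab q \<alpha> \<beta> =
     {pt (x, \<alpha> * x ^ 2 + \<beta> * x ^ (q + 1) + r, 1) | x r. r \<in> subfield_q q}
     \<union> {pt (0, 1, 0)}"

definition tangent_line :: "'a::field vec3 set set \<Rightarrow> 'a vec3 set set \<Rightarrow> bool" where
  "tangent_line U l \<longleftrightarrow> l \<in> pg_lines \<and> card (l \<inter> U) = 1"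

definition pedal :: "'a::field vec3 set set \<Rightarrow> 'a vec3 set \<Rightarrow> 'a vec3 set set" where
  "pedal U P = {Q. \<exists>l. tangent_line U l \<and> P \<in> l \<and> l \<inter> U = {Q}}"

definition primitive_elem :: "'a::field \<Rightarrow> bool" where
  "primitive_elem \<zeta> \<longleftrightarrow> (\<forall>x. x \<noteq> 0 \<longrightarrow> (\<exists>k::nat. x = \<zeta> ^ k))"

definition pencil :: "'a::field vec3 set \<Rightarrow> 'a vec3 set set \<Rightarrow> 'a vec3 set set set" where
  "pencil V B = {l \<in> pg_lines. V \<in> l \<and> (\<exists>E\<in>B. E \<in> l)}"

end

(*
  Over F = GF(q^2) the power map x \<mapsto> x^q is an additive involution fixing GF(q): q is a power of
  the characteristic because, by Cauchy's theorem for the additive group, every prime divisor of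
  |F| is the characteristic. Nothing else about F is used.

  Put h(x) = \<alpha> x^2 + \<beta> x^(q+1) (unital_height), so that the affine part of U is
  {(x, y) : y - h(x) \<in> GF(q)}, and H(x) = h(x) - h(x)^q (height_skew). The nonsquare
  hypothesis says exactly that H has no nonzero zero. Let R = (0, c, 1) with c^q = -c and c \<noteq> 0
  (the theorem takes c = w \<epsilon>). The line x = 0 through R contains the two points (0,1,0) and
  (0,0,1) of U, so every tangent through R has the form y = m x + c, and it meets U at the roots
  of D_m(x) = H(x) + (m x)^q - m x - 2c (line_defect). Expanding D_m around a root x0 shows that
  x0 is the only root exactly when m is the tangent slope 2 \<alpha> x0 + (\<beta> - \<beta>^q) x0^q and
  H(x0) + 2c = 0. At such a point y + c = \<alpha> x0^2 + (\<alpha> x0^2)^q lies in GF(q), so the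
  horizontal line through the point passes through (1,0,0) and a point of the Baer subline.
*)
theory Submission
  imports Defs "HOL-Algebra.Sylow" "HOL-Algebra.Multiplicative_Group" "HOL-Computational_Algebra.Primes"
    "HOL-Computational_Algebra.Polynomial"
begin

section \<open>Finite fields\<close>

definition additive_group :: "'a::ab_group_add monoid" where
  "additive_group = \<lparr>carrier = UNIV, monoid.mult = (+), one = 0\<rparr>"

definition multiplicative_group :: "'a::field monoid" where
  "multiplicative_group = \<lparr>carrier = UNIV - {0}, monoid.mult = (*), one = 1\<rparr>"

lemma group_additive_group: "group (additive_group :: 'a::ab_group_add monoid)"
  by (rule groupI) (auto simp: additive_group_def add.assoc intro: exI[of _ "- x" for x])

lemma group_multiplicative_group: "group (multiplicative_group :: 'a::field monoid)"
proof (rule groupI)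
  show "\<exists>y\<in>carrier multiplicative_group. y \<otimes>\<^bsub>multiplicative_group\<^esub> x = \<one>\<^bsub>multiplicative_group\<^esub>"
    if "x \<in> carrier (multiplicative_group :: 'a monoid)" for x
    using that by (intro bexI[of _ "inverse x"]) (auto simp: multiplicative_group_def)
qed (auto simp: multiplicative_group_def mult.assoc)

lemma nat_pow_additive_group_carrier_update:
  "x [^]\<^bsub>additive_group\<lparr>carrier := H\<rparr>\<^esub> (n::nat) = of_nat n * (x::'a::ring_1)"
  by (induction n) (simp_all add: additive_group_def nat_pow_def algebra_simps)

lemma nat_pow_multiplicative_group:
  "x [^]\<^bsub>multiplicative_group\<^esub> (n::nat) = (x::'a::field) ^ n"
  by (induction n) (simp_all add: multiplicative_group_def nat_pow_def)

lemma eq_power_multiplicity_if_unique_prime_divisor: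
  fixes n p :: nat
  assumes "prime p" "n > 0" and only_p: "\<And>r. prime r \<Longrightarrow> r dvd n \<Longrightarrow> r = p"
  shows "n = p ^ multiplicity p n"
proof -
  obtain m where n: "n = p ^ multiplicity p n * m" and "\<not> p dvd m"
    by (rule multiplicity_decompose') (use assms(1,2) not_prime_unit in blast)+
  have "m = 1"
  proof (rule ccontr)
    assume "m \<noteq> 1"
    then obtain r where "prime r" "r dvd m"
      using prime_factor_nat by blast
    then show False
      using only_p[of r] n \<open>\<not> p dvd m\<close> by (metis dvd_mult)
  qed
  then show ?thesis
    using n by simp
qed

lemma finite_field_prime_CHAR: "finite (UNIV :: 'a::field set) \<Longrightarrow> prime CHAR('a)"
  by (rule prime_CHAR_semidom[OF finite_imp_CHAR_pos])

lemma finite_field_power_card_minus_one: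
  fixes x :: "'a::field"
  assumes "finite (UNIV :: 'a set)" "x \<noteq> 0"
  shows "x ^ (card (UNIV :: 'a set) - 1) = 1"
proof -
  have "Coset.order (multiplicative_group :: 'a monoid) = card (UNIV :: 'a set) - 1"
    using assms(1) by (simp add: Coset.order_def multiplicative_group_def card_Diff_singleton)
  then show ?thesis
    using group.pow_order_eq_1[OF group_multiplicative_group, of x] assms(2)
    by (simp add: nat_pow_multiplicative_group) (simp add: multiplicative_group_def)
qed

lemma finite_field_power_card:
  fixes x :: "'a::field"
  assumes "finite (UNIV :: 'a set)"
  shows "x ^ card (UNIV :: 'a set) = x"
proof (cases "x = 0")
  case False
  have "x ^ card (UNIV :: 'a set) = x ^ Suc (card (UNIV :: 'a set) - 1)"
    using finite_UNIV_card_ge_0[OF assms] by simp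
  also have "\<dots> = x"
    using finite_field_power_card_minus_one[OF assms False] by simp
  finally show ?thesis .
qed (use assms in \<open>simp add: card_gt_0_iff\<close>)

text \<open>Cauchy's theorem via Sylow's theorem: a subgroup of prime order r of the additive group
  contains an element of order r, and every element has order dividing the characteristic.\<close>
lemma finite_field_prime_dvd_card_eq_CHAR:
  fixes r :: nat
  assumes fin: "finite (UNIV :: 'a::field set)" and r: "prime r" "r dvd card (UNIV :: 'a set)"
  shows "r = CHAR('a)"
proof -
  let ?G = "additive_group :: 'a monoid"
  obtain m where "Coset.order ?G = r ^ 1 * m"
    using r(2) by (auto simp: Coset.order_def additive_group_def)
  from sylow_thm[OF r(1) group_additive_group this] obtain H where H: "subgroup H ?G" "card H = r"
    using fin by (auto simp: additive_group_def)
  let ?K = "?G\<lparr>carrier := H\<rparr>"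
  interpret K: group ?K
    using subgroup.subgroup_is_group[OF H(1) group_additive_group] .
  have "\<not> H \<subseteq> {0}"
  proof
    assume "H \<subseteq> {0}"
    then have "card H \<le> 1"
      using card_mono[of "{0}" H] by simp
    then show False
      using H(2) prime_gt_1_nat[OF r(1)] by simp
  qed
  then obtain h where h: "h \<in> H" "h \<noteq> 0"
    by blast
  have "K.ord h dvd r"
    using K.ord_dvd_group_order[of h] h H(2) by (simp add: Coset.order_def)
  moreover have "K.ord h \<noteq> 1"
    using K.ord_eq_1[of h] h by (simp add: additive_group_def)
  ultimately have "K.ord h = r"
    using r(1) by (auto simp: prime_nat_iff)
  moreover have "K.ord h dvd CHAR('a)"
    using K.pow_eq_id[of h "CHAR('a)"] h unfolding nat_pow_additive_group_carrier_update
    by (simp add: additive_group_def)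
  ultimately show ?thesis
    using r(1) finite_field_prime_CHAR[OF fin] by (simp add: primes_dvd_imp_eq)
qed

lemma finite_field_two_neq_zero:
  assumes fin: "finite (UNIV :: 'a::field set)" and odd: "odd (card (UNIV :: 'a set))"
  shows "(2::'a) \<noteq> 0"
proof
  assume "(2::'a) = 0"
  then have "CHAR('a) dvd 2"
    using of_nat_eq_0_iff_char_dvd[of 2, where 'a = 'a] by simp
  then have char2: "CHAR('a) = 2"
    using finite_field_prime_CHAR[OF fin] by (simp add: primes_dvd_imp_eq)
  have "card (UNIV :: 'a set) \<noteq> 1"
    using card_mono[OF fin, of "{0, 1}"] by auto
  then obtain r where "prime r" "r dvd card (UNIV :: 'a set)"
    using prime_factor_nat by blast
  then show False
    using finite_field_prime_dvd_card_eq_CHAR[OF fin] char2 odd by auto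
qed

lemma CHAR_power_if_card_eq_square:
  assumes fin: "finite (UNIV :: 'a::field set)" and card: "card (UNIV :: 'a set) = q ^ 2"
  shows "q = CHAR('a) ^ multiplicity CHAR('a) q"
proof (rule eq_power_multiplicity_if_unique_prime_divisor)
  show "prime CHAR('a)"
    using finite_field_prime_CHAR[OF fin] .
  show "q > 0"
    using finite_UNIV_card_ge_0[OF fin] card by (simp add: gr0I)
  show "r = CHAR('a)" if "prime r" "r dvd q" for r
    using finite_field_prime_dvd_card_eq_CHAR[OF fin that(1)] that(2) card
    by (simp add: power2_eq_square)
qed

lemma finite_field_frobenius_add:
  fixes x y :: "'a::field"
  assumes fin: "finite (UNIV :: 'a set)" and card: "card (UNIV :: 'a set) = q ^ 2"
  shows "(x + y) ^ q = x ^ q + y ^ q"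
  using freshmans_dream'[OF finite_field_prime_CHAR[OF fin] CHAR_power_if_card_eq_square[OF fin card]] .

lemma finite_field_frobenius_involution:
  fixes x :: "'a::field"
  assumes fin: "finite (UNIV :: 'a set)" and card: "card (UNIV :: 'a set) = q ^ 2"
  shows "(x ^ q) ^ q = x"
  using finite_field_power_card[OF fin, of x] card by (simp add: power_mult[symmetric] power2_eq_square)

lemma primitive_elem_neq_zero:
  assumes "primitive_elem (\<zeta> :: 'a::field)" and "(2::'a) \<noteq> 0"
  shows "\<zeta> \<noteq> 0"
proof
  assume "\<zeta> = 0"
  obtain k where "- 1 = \<zeta> ^ k"
    using assms(1) unfolding primitive_elem_def by (metis neg_equal_0_iff_equal zero_neq_one)
  with \<open>\<zeta> = 0\<close> have "(- 1 :: 'a) = 1"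
    by (cases k) auto
  then show False
    using assms(2) by (simp add: neg_eq_iff_add_eq_0)
qed

lemma primitive_elem_power_neq_one:
  fixes \<zeta> :: "'a::field"
  assumes fin: "finite (UNIV :: 'a set)" and prim: "primitive_elem \<zeta>"
    and M: "0 < M" "M < card (UNIV :: 'a set) - 1"
  shows "\<zeta> ^ M \<noteq> 1"
proof
  assume \<zeta>M: "\<zeta> ^ M = 1"
  define P :: "'a poly" where "P = monom 1 M - 1"
  have poly_P: "poly P x = x ^ M - 1" for x
    by (simp add: P_def poly_monom)
  have "P \<noteq> 0"
    using poly_P[of 0] M(1) by (auto simp: power_0_left)
  have roots: "UNIV - {0} \<subseteq> {x. poly P x = 0}"
  proof
    fix x :: 'a
    assume "x \<in> UNIV - {0}"
    then obtain k where "x = \<zeta> ^ k"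
      using prim unfolding primitive_elem_def by blast
    then show "x \<in> {x. poly P x = 0}"
      using \<zeta>M by (simp add: poly_P power_mult[symmetric] mult.commute power_mult)
  qed
  have "card (UNIV :: 'a set) - 1 = card (UNIV - {0 :: 'a})"
    using fin by (simp add: card_Diff_singleton)
  also have "\<dots> \<le> card {x. poly P x = 0}"
    using card_mono[OF poly_roots_finite[OF \<open>P \<noteq> 0\<close>] roots] .
  also have "\<dots> \<le> degree P"
    by (rule card_poly_roots_bound[OF \<open>P \<noteq> 0\<close>])
  also have "\<dots> \<le> M"
    unfolding P_def by (rule degree_diff_le) (simp_all add: degree_monom_le)
  finally show False
    using M(2) by simp
qed

lemma primitive_elem_power_half_card:
  fixes \<zeta> :: "'a::field"
  assumes fin: "finite (UNIV :: 'a set)" and odd: "odd (card (UNIV :: 'a set))"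
    and prim: "primitive_elem \<zeta>"
  shows "\<zeta> ^ ((card (UNIV :: 'a set) - 1) div 2) = -1"
proof -
  define M where "M = (card (UNIV :: 'a set) - 1) div 2"
  have "card (UNIV :: 'a set) \<ge> 2"
    using card_mono[OF fin, of "{0, 1}"] by simp
  then have M: "0 < M" "M < card (UNIV :: 'a set) - 1" "card (UNIV :: 'a set) - 1 = 2 * M"
    using odd by (auto simp: M_def elim!: oddE)
  have "\<zeta> \<noteq> 0"
    using primitive_elem_neq_zero[OF prim finite_field_two_neq_zero[OF fin odd]] .
  then have "(\<zeta> ^ M) ^ 2 = 1"
    using finite_field_power_card_minus_one[OF fin] M(3) by (simp add: power_mult[symmetric] mult.commute)
  then have "\<zeta> ^ M = 1 \<or> \<zeta> ^ M = -1"
    by (simp add: power2_eq_1_iff)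
  then show ?thesis
    using primitive_elem_power_neq_one[OF fin prim M(1,2)] by (simp add: M_def)
qed

lemma primitive_elem_power_conj:
  fixes \<zeta> :: "'a::field"
  assumes fin: "finite (UNIV :: 'a set)" and card: "card (UNIV :: 'a set) = q ^ 2"
    and odd: "odd q" and prim: "primitive_elem \<zeta>"
  shows "(\<zeta> ^ ((q + 1) div 2)) ^ q = - (\<zeta> ^ ((q + 1) div 2))"
proof -
  define \<epsilon> where "\<epsilon> = \<zeta> ^ ((q + 1) div 2)"
  obtain k where k: "q = 2 * k + 1"
    using odd by (rule oddE)
  have "(q + 1) div 2 * (q - 1) = (card (UNIV :: 'a set) - 1) div 2"
    unfolding card k by (simp add: power2_eq_square algebra_simps)
  then have "\<epsilon> ^ (q - 1) = \<zeta> ^ ((card (UNIV :: 'a set) - 1) div 2)"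
    by (simp only: \<epsilon>_def power_mult[symmetric])
  also have "\<dots> = -1"
    using primitive_elem_power_half_card[OF fin _ prim] odd card by simp
  finally have "\<epsilon> ^ (q - 1) = -1" .
  then have "\<epsilon> ^ q = - \<epsilon>"
    using power_Suc2[of \<epsilon> "q - 1"] k by simp
  then show ?thesis
    by (simp only: \<epsilon>_def)
qed

section \<open>Points and lines of PG(2, F)\<close>

lemma inj_image_eq_singleton_iff:
  assumes "inj f"
  shows "f ` S = {y} \<longleftrightarrow> (\<exists>x. S = {x} \<and> y = f x)"
proof
  assume "f ` S = {y}"
  then obtain x where "x \<in> S" "y = f x"
    by (metis imageE insertI1)
  moreover have "x' = x" if "x' \<in> S" for x'
    using \<open>f ` S = {y}\<close> \<open>x \<in> S\<close> \<open>y = f x\<close> that assms by (auto dest: injD)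
  ultimately show "\<exists>x. S = {x} \<and> y = f x"
    by blast
qed auto

lemma dot3_eq [simp]: "dot3 (a1, a2, a3) (x, y, z) = a1 * x + a2 * y + a3 * z"
  by (simp add: dot3_def)

lemma pt_self: "v \<in> pt v"
proof -
  have "scal3 1 v = v"
    by (cases v) (simp add: scal3_def)
  then show ?thesis
    unfolding pt_def by (metis (mono_tags, lifting) mem_Collect_eq one_neq_zero)
qed

lemma pt_affine_eq_iff: "pt (x, y, 1) = pt (x', y', (1::'a::field)) \<longleftrightarrow> x = x' \<and> y = y'"
proof
  assume "pt (x, y, 1) = pt (x', y', (1::'a))"
  then obtain c where "(x, y, 1) = scal3 c (x', y', 1)"
    using pt_self[of "(x, y, 1)"] unfolding pt_def by auto
  then show "x = x' \<and> y = y'"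
    by (simp add: scal3_def)
qed simp

lemma pt_affine_neq_infinity: "pt (x, y, 1) \<noteq> pt (0, 1, (0::'a::field))"
proof
  assume "pt (x, y, 1) = pt (0, 1, (0::'a))"
  then obtain c where "(x, y, 1) = scal3 c (0, 1, (0::'a))"
    using pt_self[of "(x, y, 1)"] unfolding pt_def by auto
  then show False
    by (simp add: scal3_def)
qed

lemma pt_in_pg_line_iff: "pt v \<in> pg_line a \<longleftrightarrow> v \<noteq> (0, 0, 0) \<and> dot3 a (v :: 'a::field vec3) = 0"
proof
  assume "pt v \<in> pg_line a"
  then obtain u where u: "pt v = pt u" "u \<noteq> (0, 0, 0)" "dot3 a u = 0"
    unfolding pg_line_def by blast
  then obtain c where c: "c \<noteq> 0" "v = scal3 c u"
    using pt_self[of v] unfolding pt_def by auto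
  moreover have "dot3 a v = c * dot3 a u"
    by (cases a, cases u) (simp add: c(2) scal3_def algebra_simps)
  ultimately show "v \<noteq> (0, 0, 0) \<and> dot3 a v = 0"
    using u(2,3) by (cases u) (auto simp: scal3_def)
qed (unfold pg_line_def, blast)

lemma pg_line_scal3:
  assumes "c \<noteq> 0"
  shows "pg_line (scal3 c a) = pg_line (a :: 'a::field vec3)"
proof -
  have "dot3 (scal3 c a) v = c * dot3 a v" for v
    by (cases a, cases v) (simp add: scal3_def algebra_simps)
  then show ?thesis
    using assms by (simp add: pg_line_def)
qed

lemma pg_line_in_pg_lines: "a \<noteq> (0, 0, 0) \<Longrightarrow> pg_line a \<in> pg_lines"
  unfolding pg_lines_def by blast

lemma affine_pt_in_pencil_through_infinity:
  assumes "pt (0, y, 1) \<in> B"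
  shows "pt (x, y, (1::'a::field)) \<in> \<Union> (pencil (pt (1, 0, 0)) B)"
proof -
  have "pg_line (0, 1, - y) \<in> pencil (pt (1, 0, 0)) B"
    using assms unfolding pencil_def
    by (auto simp: pg_line_in_pg_lines pt_in_pg_line_iff intro!: bexI[OF _ assms])
  moreover have "pt (x, y, 1) \<in> pg_line (0, 1, - y)"
    by (simp add: pt_in_pg_line_iff)
  ultimately show ?thesis
    by blast
qed

lemma unital_ab_cases:
  assumes "P \<in> unital_ab q \<alpha> \<beta>"
  obtains "P = pt (0, 1, 0)" | x y where "P = pt (x, y, 1)"
  using assms unfolding unital_ab_def by blast

lemma infinity_in_unital_ab: "pt (0, 1, 0) \<in> unital_ab q \<alpha> \<beta>"
  unfolding unital_ab_def by blast

section \<open>Tangents to the unital through a point of the axis x = 0\<close>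

locale frobenius_unital =
  fixes q :: nat and \<alpha> \<beta> :: "'a::field"
  assumes frobenius_add [simp]: "(x + y :: 'a) ^ q = x ^ q + y ^ q"
    and frobenius_involution [simp]: "((x :: 'a) ^ q) ^ q = x"
    and two_neq_zero: "(2::'a) \<noteq> 0"
    and discriminant_nonsquare: "\<not> (\<exists>y \<in> subfield_q q. y ^ 2 = (\<beta> ^ q - \<beta>) ^ 2 + 4 * \<alpha> ^ (q + 1))"
begin

lemma q_pos: "0 < q"
  using frobenius_involution[of 0] by (cases q) auto

lemma frobenius_zero [simp]: "(0::'a) ^ q = 0"
  using q_pos by (simp add: power_0_left)

lemma frobenius_minus [simp]: "(- x :: 'a) ^ q = - (x ^ q)"
  using frobenius_add[of x "- x"] by (simp add: eq_neg_iff_add_eq_0 add.commute)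

lemma frobenius_diff [simp]: "(x - y :: 'a) ^ q = x ^ q - y ^ q"
  using frobenius_add[of x "- y"] by simp

lemma frobenius_two [simp]: "(2::'a) ^ q = 2"
  using frobenius_add[of 1 1] by simp

lemma frobenius_square [simp]: "((x :: 'a) ^ 2) ^ q = (x ^ q) ^ 2"
  by (simp flip: power_mult add: mult.commute)

lemma subfield_q_iff: "(x :: 'a) \<in> subfield_q q \<longleftrightarrow> x ^ q = x"
  by (simp add: subfield_q_def)

lemma trace_in_subfield_q: "(x :: 'a) + x ^ q \<in> subfield_q q"
  by (simp add: subfield_q_iff add.commute)

definition unital_height :: "'a \<Rightarrow> 'a" where
  "unital_height x = \<alpha> * x ^ 2 + \<beta> * x ^ (q + 1)"

lemma affine_pt_in_unital_ab_iff:
  "pt (x, y, 1) \<in> unital_ab q \<alpha> \<beta> \<longleftrightarrow> (y - unital_height x) ^ q = y - unital_height x"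
  by (auto simp: unital_ab_def unital_height_def subfield_q_iff pt_affine_eq_iff pt_affine_neq_infinity
      intro: exI[of _ "y - unital_height x"])

definition height_skew :: "'a \<Rightarrow> 'a" where
  "height_skew x = unital_height x - unital_height x ^ q"

definition tangent_slope :: "'a \<Rightarrow> 'a" where
  "tangent_slope x = 2 * \<alpha> * x + (\<beta> - \<beta> ^ q) * x ^ q"

lemma height_skew_conj: "height_skew x ^ q = - height_skew x"
  by (simp add: height_skew_def)

lemma height_skew_eq:
  "height_skew x = \<alpha> * x ^ 2 - \<alpha> ^ q * x ^ (2 * q) + (\<beta> - \<beta> ^ q) * x ^ (q + 1)"
  by (simp add: height_skew_def unital_height_def power_mult_distrib power_add algebra_simps
      power_mult[of x q 2] mult.commute[of 2 q])

lemma tangent_slope_mult_self: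
  "tangent_slope x * x = 2 * \<alpha> * x ^ 2 + (\<beta> - \<beta> ^ q) * x ^ (q + 1)"
  by (simp add: tangent_slope_def algebra_simps power2_eq_square)

lemma height_skew_add:
  "height_skew (x + y) = height_skew x + height_skew y + tangent_slope x * y - (tangent_slope x * y) ^ q"
  by (simp add: height_skew_def unital_height_def tangent_slope_def power_mult_distrib power_add
      power2_eq_square algebra_simps)

lemma height_skew_scale: "t ^ q = t \<Longrightarrow> height_skew (t * x) = t ^ 2 * height_skew x"
  by (simp add: height_skew_def unital_height_def power_mult_distrib power_add power2_eq_square
      algebra_simps)

lemma height_skew_eq_zero_iff: "height_skew x = 0 \<longleftrightarrow> x = 0"
proof
  assume H: "height_skew x = 0"
  show "x = 0"
  proof (rule ccontr)
    assume "x \<noteq> 0"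
    define u where "u = \<alpha> * x / x ^ q"
    have uq: "u ^ q = \<alpha> ^ q * x ^ q / x"
      by (simp add: u_def power_divide power_mult_distrib)
    have "u - u ^ q = \<beta> ^ q - \<beta>"
      using H \<open>x \<noteq> 0\<close> unfolding height_skew_eq uq
      by (simp add: u_def field_simps power2_eq_square power_add power_mult[of x q 2]
          mult.commute[of 2 q])
    moreover have "u * u ^ q = \<alpha> ^ (q + 1)"
      using \<open>x \<noteq> 0\<close> unfolding uq by (simp add: u_def field_simps)
    moreover have "(u + u ^ q) ^ 2 = (u - u ^ q) ^ 2 + 4 * (u * u ^ q)"
      by (simp add: power2_eq_square algebra_simps)
    ultimately have "(u + u ^ q) ^ 2 = (\<beta> ^ q - \<beta>) ^ 2 + 4 * \<alpha> ^ (q + 1)"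
      by simp
    then show False
      using discriminant_nonsquare trace_in_subfield_q by blast
  qed
qed (simp add: height_skew_def unital_height_def)

end

locale frobenius_unital_point = frobenius_unital +
  fixes c :: 'a
  assumes c_conj: "c ^ q = - c"
    and c_neq_zero: "c \<noteq> 0"
begin

definition line_defect :: "'a \<Rightarrow> 'a \<Rightarrow> 'a" where
  "line_defect m x = height_skew x + (m * x) ^ q - m * x - 2 * c"

lemma affine_pt_on_slope_in_unital_ab_iff:
  "pt (x, m * x + c, 1) \<in> unital_ab q \<alpha> \<beta> \<longleftrightarrow> line_defect m x = 0"
proof -
  have "(m * x + c - unital_height x) ^ q - (m * x + c - unital_height x) = line_defect m x"
    by (simp add: line_defect_def height_skew_def c_conj)
  then show ?thesis
    unfolding affine_pt_in_unital_ab_iff by (metis eq_iff_diff_eq_0)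
qed

lemma line_defect_add:
  "line_defect m (x + y) =
     line_defect m x + height_skew y + ((m - tangent_slope x) * y) ^ q - (m - tangent_slope x) * y"
  by (simp add: line_defect_def height_skew_add algebra_simps)

lemma line_defect_tangent_slope: "line_defect (tangent_slope x) x = - (height_skew x + 2 * c)"
proof -
  have "(tangent_slope x * x) ^ q - tangent_slope x * x = - 2 * height_skew x"
    by (simp add: tangent_slope_def height_skew_def unital_height_def power_mult_distrib power_add
        power2_eq_square algebra_simps)
  then show ?thesis
    by (simp add: line_defect_def algebra_simps)
qed

text \<open>For t in GF(q) the linear part of line_defect m at x0 + t c / d, d the difference of the
  slopes, is -2 t c; the choice t = 2 c / H(c / d) makes the quadratic part cancel it.\<close>
lemma line_defect_second_root:
  assumes x0_root: "line_defect m x0 = 0" and "m \<noteq> tangent_slope x0"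
  obtains y where "y \<noteq> 0" "line_defect m (x0 + y) = 0"
proof -
  define d where "d = m - tangent_slope x0"
  have "d \<noteq> 0"
    using assms(2) by (simp add: d_def)
  define y where "y = c / d"
  have "y \<noteq> 0"
    using \<open>d \<noteq> 0\<close> c_neq_zero by (simp add: y_def)
  then have "height_skew y \<noteq> 0"
    by (simp add: height_skew_eq_zero_iff)
  define t where "t = 2 * c / height_skew y"
  have "t ^ q = t"
    by (simp add: t_def power_divide height_skew_conj c_conj)
  have "t \<noteq> 0"
    using two_neq_zero c_neq_zero \<open>height_skew y \<noteq> 0\<close> by (simp add: t_def)
  have dty: "d * (t * y) = t * c"
    using \<open>d \<noteq> 0\<close> by (simp add: y_def)
  have "line_defect m (x0 + t * y) =
      line_defect m x0 + height_skew (t * y) + (d * (t * y)) ^ q - d * (t * y)"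
    unfolding d_def by (rule line_defect_add)
  also have "\<dots> = t ^ 2 * height_skew y + (t * c) ^ q - t * c"
    unfolding dty x0_root height_skew_scale[OF \<open>t ^ q = t\<close>] by simp
  also have "\<dots> = t * (t * height_skew y - 2 * c)"
    using \<open>t ^ q = t\<close> by (simp add: power_mult_distrib c_conj power2_eq_square algebra_simps)
  also have "\<dots> = 0"
    using \<open>height_skew y \<noteq> 0\<close> by (simp add: t_def)
  finally have root: "line_defect m (x0 + t * y) = 0" .
  have "t * y \<noteq> 0"
    using \<open>t \<noteq> 0\<close> \<open>y \<noteq> 0\<close> by simp
  from this root show ?thesis
    by (rule that)
qed

lemma line_defect_roots_eq_singleton_iff:
  "{x. line_defect m x = 0} = {x0} \<longleftrightarrow> m = tangent_slope x0 \<and> height_skew x0 + 2 * c = 0"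
proof
  assume roots: "{x. line_defect m x = 0} = {x0}"
  then have x0_root: "line_defect m x0 = 0"
    by blast
  have "m = tangent_slope x0"
  proof (rule ccontr)
    assume "m \<noteq> tangent_slope x0"
    then obtain y where "y \<noteq> 0" "line_defect m (x0 + y) = 0"
      using line_defect_second_root[OF x0_root] by blast
    then have "x0 + y = x0"
      using roots by blast
    with \<open>y \<noteq> 0\<close> show False
      by simp
  qed
  with x0_root show "m = tangent_slope x0 \<and> height_skew x0 + 2 * c = 0"
    using line_defect_tangent_slope[of x0] by (simp add: neg_eq_iff_add_eq_0)
next
  assume "m = tangent_slope x0 \<and> height_skew x0 + 2 * c = 0"
  then have "line_defect m x = height_skew (x - x0)" for x
    using line_defect_add[of m x0 "x - x0"] line_defect_tangent_slope[of x0] by simp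
  then show "{x. line_defect m x = 0} = {x0}"
    by (auto simp: height_skew_eq_zero_iff)
qed

definition slope_line :: "'a \<Rightarrow> 'a vec3 set set" where
  "slope_line m = pg_line (- m, 1, - c)"

lemma slope_line_in_pg_lines: "slope_line m \<in> pg_lines"
  by (simp add: slope_line_def pg_line_in_pg_lines)

lemma affine_pt_in_slope_line_iff: "pt (x, y, 1) \<in> slope_line m \<longleftrightarrow> y = m * x + c"
  by (auto simp: slope_line_def pt_in_pg_line_iff algebra_simps)

lemma infinity_notin_slope_line: "pt (0, 1, 0) \<notin> slope_line m"
  by (simp add: slope_line_def pt_in_pg_line_iff)

lemma slope_line_inter_unital_ab:
  "slope_line m \<inter> unital_ab q \<alpha> \<beta> = (\<lambda>x. pt (x, m * x + c, 1)) ` {x. line_defect m x = 0}"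
proof safe
  fix P
  assume "P \<in> slope_line m" "P \<in> unital_ab q \<alpha> \<beta>"
  from \<open>P \<in> unital_ab q \<alpha> \<beta>\<close> show "P \<in> (\<lambda>x. pt (x, m * x + c, 1)) ` {x. line_defect m x = 0}"
  proof (cases rule: unital_ab_cases)
    case (2 x y)
    with \<open>P \<in> slope_line m\<close> \<open>P \<in> unital_ab q \<alpha> \<beta>\<close> show ?thesis
      by (auto simp: affine_pt_in_slope_line_iff affine_pt_on_slope_in_unital_ab_iff)
  qed (use \<open>P \<in> slope_line m\<close> infinity_notin_slope_line in blast)
qed (auto simp: affine_pt_in_slope_line_iff affine_pt_on_slope_in_unital_ab_iff)

lemma tangent_line_through_axis_point:
  assumes "tangent_line (unital_ab q \<alpha> \<beta>) l" "pt (0, c, 1) \<in> l"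
  obtains m where "l = slope_line m"
proof -
  obtain a1 a2 a3 where l: "l = pg_line (a1, a2, a3)" "(a1, a2, a3) \<noteq> (0, 0, 0)"
    using assms(1) unfolding tangent_line_def pg_lines_def by auto
  have "a2 * c + a3 = 0"
    using assms(2) by (simp add: l pt_in_pg_line_iff)
  then have a3: "a3 = - a2 * c"
    by (simp add: eq_neg_iff_add_eq_0 add.commute)
  have "a2 \<noteq> 0"
  proof
    assume "a2 = 0"
    then have "pt (0, 1, 0) \<in> l \<inter> unital_ab q \<alpha> \<beta>" "pt (0, 0, 1) \<in> l \<inter> unital_ab q \<alpha> \<beta>"
      by (simp_all add: l a3 pt_in_pg_line_iff infinity_in_unital_ab affine_pt_in_unital_ab_iff
          unital_height_def power_0_left q_pos)
    moreover have "card (l \<inter> unital_ab q \<alpha> \<beta>) = 1"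
      using assms(1) unfolding tangent_line_def by blast
    then obtain P where "l \<inter> unital_ab q \<alpha> \<beta> = {P}"
      by (rule card_1_singletonE)
    ultimately show False
      using pt_affine_neq_infinity[of 0 0] by blast
  qed
  then have "(a1, a2, a3) = scal3 a2 (- (- a1 / a2), 1, - c)"
    by (simp add: a3 scal3_def)
  then have "l = slope_line (- a1 / a2)"
    using \<open>a2 \<noteq> 0\<close> by (simp add: l slope_line_def pg_line_scal3)
  then show ?thesis
    by (rule that)
qed

lemma pedal_iff_slope_line:
  "Q \<in> pedal (unital_ab q \<alpha> \<beta>) (pt (0, c, 1)) \<longleftrightarrow>
     (\<exists>m. slope_line m \<inter> unital_ab q \<alpha> \<beta> = {Q})"
proof
  assume "Q \<in> pedal (unital_ab q \<alpha> \<beta>) (pt (0, c, 1))"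
  then obtain l where l: "tangent_line (unital_ab q \<alpha> \<beta>) l" "pt (0, c, 1) \<in> l"
      "l \<inter> unital_ab q \<alpha> \<beta> = {Q}"
    unfolding pedal_def by blast
  obtain m where "l = slope_line m"
    using tangent_line_through_axis_point[OF l(1,2)] .
  with l(3) show "\<exists>m. slope_line m \<inter> unital_ab q \<alpha> \<beta> = {Q}"
    by blast
next
  assume "\<exists>m. slope_line m \<inter> unital_ab q \<alpha> \<beta> = {Q}"
  then obtain m where m: "slope_line m \<inter> unital_ab q \<alpha> \<beta> = {Q}"
    by blast
  then have "tangent_line (unital_ab q \<alpha> \<beta>) (slope_line m)"
    unfolding tangent_line_def by (simp add: slope_line_in_pg_lines)
  moreover have "pt (0, c, 1) \<in> slope_line m"
    by (simp add: affine_pt_in_slope_line_iff)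
  ultimately show "Q \<in> pedal (unital_ab q \<alpha> \<beta>) (pt (0, c, 1))"
    unfolding pedal_def using m by blast
qed

lemma mem_pedal_iff:
  "Q \<in> pedal (unital_ab q \<alpha> \<beta>) (pt (0, c, 1)) \<longleftrightarrow>
     (\<exists>x. height_skew x + 2 * c = 0 \<and> Q = pt (x, tangent_slope x * x + c, 1))"
proof -
  have inj: "inj (\<lambda>x. pt (x, m * x + c, 1))" for m
    by (rule injI) (simp add: pt_affine_eq_iff)
  show ?thesis
    unfolding pedal_iff_slope_line slope_line_inter_unital_ab inj_image_eq_singleton_iff[OF inj]
      line_defect_roots_eq_singleton_iff
    by auto
qed

lemma pedal_eq:
  "pedal (unital_ab q \<alpha> \<beta>) (pt (0, c, 1)) =
     {pt (x, 2 * \<alpha> * x ^ 2 + (\<beta> - \<beta> ^ q) * x ^ (q + 1) + c, 1) | x.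
        \<alpha> * x ^ 2 - \<alpha> ^ q * x ^ (2 * q) + (\<beta> - \<beta> ^ q) * x ^ (q + 1) + 2 * c = 0}"
  by (auto simp: mem_pedal_iff height_skew_eq tangent_slope_mult_self)

lemma tangent_point_height:
  assumes "height_skew x + 2 * c = 0"
  shows "tangent_slope x * x + 2 * c = \<alpha> * x ^ 2 + (\<alpha> * x ^ 2) ^ q"
proof -
  have "height_skew x = - (2 * c)"
    using assms by (simp add: eq_neg_iff_add_eq_0)
  moreover have "tangent_slope x * x - height_skew x = \<alpha> * x ^ 2 + (\<alpha> * x ^ 2) ^ q"
    by (simp add: tangent_slope_def height_skew_def unital_height_def power_mult_distrib power_add
        power2_eq_square algebra_simps)
  ultimately show ?thesis
    by simp
qed

lemma pedal_subset_pencil: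
  "pedal (unital_ab q \<alpha> \<beta>) (pt (0, c, 1)) \<subseteq>
     \<Union> (pencil (pt (1, 0, 0)) ({pt (0, s - c, 1) | s. s \<in> subfield_q q} \<union> {pt (0, 1, 0)}))"
proof
  fix Q
  assume "Q \<in> pedal (unital_ab q \<alpha> \<beta>) (pt (0, c, 1))"
  then obtain x where x: "height_skew x + 2 * c = 0" and Q: "Q = pt (x, tangent_slope x * x + c, 1)"
    unfolding mem_pedal_iff by blast
  define s where "s = tangent_slope x * x + 2 * c"
  have "s \<in> subfield_q q"
    unfolding s_def tangent_point_height[OF x] by (rule trace_in_subfield_q)
  then have "pt (0, s - c, 1) \<in> {pt (0, s - c, 1) | s. s \<in> subfield_q q} \<union> {pt (0, 1, 0)}"
    by blast
  moreover have "Q = pt (x, s - c, 1)"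
    by (simp add: Q s_def add.commute)
  ultimately show "Q \<in> \<Union> (pencil (pt (1, 0, 0)) ({pt (0, s - c, 1) | s. s \<in> subfield_q q} \<union> {pt (0, 1, 0)}))"
    by (simp only: affine_pt_in_pencil_through_infinity)
qed

end

theorem lemma2p6:
  fixes q :: nat and \<zeta> \<alpha> \<beta> :: "'a::field"
  assumes fin: "finite (UNIV :: 'a set)"
    and card: "card (UNIV :: 'a set) = q ^ 2"
    and odd: "odd q"
    and prim: "primitive_elem \<zeta>"
    and anz: "\<alpha> \<noteq> 0"
    and nonsq: "\<not> (\<exists>y \<in> subfield_q q. y ^ 2 = (\<beta> ^ q - \<beta>) ^ 2 + 4 * \<alpha> ^ (q + 1))"
  defines "\<epsilon> \<equiv> \<zeta> ^ ((q + 1) div 2)"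
  defines "w \<equiv> \<epsilon> ^ 2"
  defines "R2 \<equiv> pt (0, w * \<epsilon>, 1)"
  defines "U \<equiv> unital_ab q \<alpha> \<beta>"
  shows "(pedal U R2 =
           {pt (x, 2 * \<alpha> * x ^ 2 + (\<beta> - \<beta> ^ q) * x ^ (q + 1) + w * \<epsilon>, 1) | x.
              \<alpha> * x ^ 2 - \<alpha> ^ q * x ^ (2 * q) + (\<beta> - \<beta> ^ q) * x ^ (q + 1) + 2 * w * \<epsilon> = 0}) \<and>
         pedal U R2 \<subseteq>
           \<Union> (pencil (pt (1, 0, 0))
                ({pt (0, s - w * \<epsilon>, 1) | s. s \<in> subfield_q q} \<union> {pt (0, 1, 0)}))"
proof -
  have "odd (card (UNIV :: 'a set))"
    using card odd by simp
  then have two: "(2::'a) \<noteq> 0"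
    using finite_field_two_neq_zero[OF fin] by blast
  have \<epsilon>_conj: "\<epsilon> ^ q = - \<epsilon>"
    unfolding \<epsilon>_def by (rule primitive_elem_power_conj[OF fin card odd prim])
  have "\<epsilon> \<noteq> 0"
    using primitive_elem_neq_zero[OF prim two] by (simp add: \<epsilon>_def)
  interpret frobenius_unital_point q \<alpha> \<beta> "w * \<epsilon>"
  proof
    show "(x + y) ^ q = x ^ q + y ^ q" for x y :: 'a
      by (rule finite_field_frobenius_add[OF fin card])
    show "(x ^ q) ^ q = x" for x :: 'a
      by (rule finite_field_frobenius_involution[OF fin card])
    have "(\<epsilon> ^ 2) ^ q = (\<epsilon> ^ q) ^ 2"
      by (simp add: mult.commute flip: power_mult)
    then show "(w * \<epsilon>) ^ q = - (w * \<epsilon>)"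
      by (simp add: w_def power_mult_distrib \<epsilon>_conj)
  qed (use two nonsq \<open>\<epsilon> \<noteq> 0\<close> in \<open>simp_all add: w_def\<close>)
  have assoc: "2 * w * \<epsilon> = 2 * (w * \<epsilon>)"
    by (rule mult.assoc)
  show ?thesis
    unfolding R2_def U_def assoc using pedal_eq pedal_subset_pencil by (rule conjI)
qed

end
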